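(* Let $\mathcal{D}$ be a finite dataset of formulae in $\mathcal{L}^k_{\mathtt{CNF}}(n,m)$. For every $\epsilon>0$ there exists $F\in\mathcal{F}^{n,m}_{\mathtt{RNIGNN}}$ such that for all $\phi\in\mathcal{D}$, $\Pr\big(\mathbb{I}^{n,m}_{\mathtt{SAT}}(F,\phi)\neq\Phi^{n,m}_{\mathtt{sat}}(\phi)\big)<\epsilon$.
   Context: $k$-CNF formulae: finite conjunctions of pairwise distinct $k$-clauses (disjunctions of $k$ literals over distinct letters); $\mathcal{L}^k_{\mathtt{CNF}}(n,m)$ is the set of those with at most $n$ letters and $m$ clauses. $\Phi^{n,m}_{\mathtt{sat}}(\phi)=1$ if $\phi$ is satisfiable, $0$ otherwise. MILP graph $G_\phi$: with $(\vec{A}_\phi)_{ij}=1$ if $p_j\in C_i$, $-1$ if $\neg p_j\in C_i$, $0$ otherwise, and $b_i=1-$(number of negative literals in $C_i$), $G_\phi$ is the weighted bipartite graph with constraint nodes $v_1,\ldots,v_m$ (feature $b_i$), variable nodes $w_1,\ldots,w_n$ (empty feature), edge weights $E_{ij}=(\vec{A}_\phi)_{ij}$. GNN: $h^{1,V}_i=f^V_{\mathtt{in}}(x^V_i)$, $h^{1,W}_j=f^W_{\mathtt{in}}(x^W_j)\in\mathbb{R}^d$; for $1\le k<l$, $h^{k+1,V}_i=g^V_{k+1}(h^{k,V}_i,\sum_jE_{ij}f^W_{k+1}(h^{k,W}_j))$, $h^{k+1,W}_j=g^W_{k+1}(h^{k,W}_j,\sum_iE_{ij}f^V_{k+1}(h^{k,V}_i))$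 with learnable functions; output $\hat{y}_{G_\phi}=f_{\mathtt{out}}(\sum_ih^{l,V}_i,\sum_jh^{l,W}_j)\in\mathbb{R}$. A GNN with Random Node Initialisation (RNI) is such a GNN where each node's input feature is extended with an additional random value drawn independently and uniformly from $[0,1]$, so that the output is a random variable. $\mathcal{F}^{n,m}_{\mathtt{RNIGNN}}$ is the set of maps $F(\phi)=\hat{y}_{G_\phi}$ on $\mathcal{L}^k_{\mathtt{CNF}}(n,m)$ given by GNNs with RNI. $\mathbb{I}^{n,m}_{\mathtt{SAT}}(F,\phi)=1$ if $F(\phi)>\tfrac12$ and $0$ otherwise. *)

theory Defs
  imports "HOL-Analysis.Analysis" "HOL-Probability.Probability"
begin

text \<open>A literal is a pair (j, s): the letter p_j (j a natural number, letters
p_0, ..., p_(n-1) play the role of p_1, ..., p_n), positive if s = True and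
negated if s = False. A clause is a finite set of literals; a formula is a
list of clauses (the conjunction, constraint nodes v_1..v_m in list order).\<close>

type_synonym lit = "nat \<times> bool"
type_synonym clause = "lit set"
type_synonym formula = "clause list"

definition k_clause :: "nat \<Rightarrow> clause \<Rightarrow> bool" where
  "k_clause k C \<longleftrightarrow> finite C \<and> card C = k \<and> inj_on fst C"

definition kcnf :: "nat \<Rightarrow> nat \<Rightarrow> nat \<Rightarrow> formula set" where
  "kcnf k n m = {\<phi>. distinct \<phi> \<and> length \<phi> \<le> m \<and>
      (\<forall>C\<in>set \<phi>. k_clause k C \<and> (\<forall>l\<in>C. fst l < n))}"

definition satisfiable :: "formula \<Rightarrow> bool" where
  "satisfiable \<phi> \<longleftrightarrow> (\<exists>v :: nat \<Rightarrow> bool. \<forall>C\<in>set \<phi>. \<exists>l\<in>C. v (fst l) = snd l)"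

definition Phi_sat :: "formula \<Rightarrow> nat" where
  "Phi_sat \<phi> = (if satisfiable \<phi> then 1 else 0)"

definition edge_w :: "formula \<Rightarrow> nat \<Rightarrow> nat \<Rightarrow> real" where
  "edge_w \<phi> i j = (if (j, True) \<in> \<phi> ! i then 1 else if (j, False) \<in> \<phi> ! i then -1 else 0)"

definition b_feat :: "formula \<Rightarrow> nat \<Rightarrow> real" where
  "b_feat \<phi> i = 1 - real (card {l \<in> \<phi> ! i. snd l = False})"

text \<open>Hidden vectors in R^d are represented as functions nat => real vanishing
outside {..<d} (product topology = Euclidean topology on this subspace).\<close>

type_synonym vec = "nat \<Rightarrow> real"

definition vecs :: "nat \<Rightarrow> vec set" where
  "vecs d = {x. \<forall>c\<ge>d. x c = 0}"

record gnn =
  dim :: nat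
  layers :: nat
  fin_V :: "real \<times> real \<Rightarrow> vec"   \<comment> \<open>(b_i, random value)\<close>
  fin_W :: "real \<Rightarrow> vec"            \<comment> \<open>(empty feature, random value)\<close>
  fV :: "nat \<Rightarrow> vec \<Rightarrow> vec"
  fW :: "nat \<Rightarrow> vec \<Rightarrow> vec"
  gV :: "nat \<Rightarrow> vec \<times> vec \<Rightarrow> vec"
  gW :: "nat \<Rightarrow> vec \<times> vec \<Rightarrow> vec"
  fout :: "vec \<times> vec \<Rightarrow> real"

text \<open>Learnable functions are taken to be continuous maps between the
appropriate Euclidean spaces (as e.g. MLPs are).\<close>

definition valid_gnn :: "gnn \<Rightarrow> bool" where
  "valid_gnn N \<longleftrightarrow> (let d = dim N in
     layers N \<ge> 1 \<and>
     continuous_on UNIV (fin_V N) \<and> range (fin_V N) \<subseteq> vecs d \<and>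
     continuous_on UNIV (fin_W N) \<and> range (fin_W N) \<subseteq> vecs d \<and>
     (\<forall>k\<in>{2..layers N}.
        continuous_on (vecs d) (fV N k) \<and> fV N k ` vecs d \<subseteq> vecs d \<and>
        continuous_on (vecs d) (fW N k) \<and> fW N k ` vecs d \<subseteq> vecs d \<and>
        continuous_on (vecs d \<times> vecs d) (gV N k) \<and> gV N k ` (vecs d \<times> vecs d) \<subseteq> vecs d \<and>
        continuous_on (vecs d \<times> vecs d) (gW N k) \<and> gW N k ` (vecs d \<times> vecs d) \<subseteq> vecs d) \<and>
     continuous_on (vecs d \<times> vecs d) (fout N))"

text \<open>Node states: constraint node i is Inl i (i < length phi), variable node j
is Inr j (j < n). r gives the random value of each node. hidden N n phi r t is
the pair of (constraint states, variable states) at layer t+1.\<close>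

fun hidden :: "gnn \<Rightarrow> nat \<Rightarrow> formula \<Rightarrow> (nat + nat \<Rightarrow> real) \<Rightarrow> nat
                 \<Rightarrow> (nat \<Rightarrow> vec) \<times> (nat \<Rightarrow> vec)" where
  "hidden N n \<phi> r 0 =
     ((\<lambda>i. fin_V N (b_feat \<phi> i, r (Inl i))), (\<lambda>j. fin_W N (r (Inr j))))"
| "hidden N n \<phi> r (Suc t) =
     (let (hv, hw) = hidden N n \<phi> r t; k = Suc (Suc t) in
      ((\<lambda>i. gV N k (hv i, (\<lambda>c. \<Sum>j<n. edge_w \<phi> i j * fW N k (hw j) c))),
       (\<lambda>j. gW N k (hw j, (\<lambda>c. \<Sum>i<length \<phi>. edge_w \<phi> i j * fV N k (hv i) c)))))"

definition gnn_out :: "gnn \<Rightarrow> nat \<Rightarrow> formula \<Rightarrow> (nat + nat \<Rightarrow> real) \<Rightarrow> real" where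
  "gnn_out N n \<phi> r =
     (let (hv, hw) = hidden N n \<phi> r (layers N - 1) in
      fout N ((\<lambda>c. \<Sum>i<length \<phi>. hv i c), (\<lambda>c. \<Sum>j<n. hw j c)))"

definition I_SAT :: "gnn \<Rightarrow> nat \<Rightarrow> formula \<Rightarrow> (nat + nat \<Rightarrow> real) \<Rightarrow> nat" where
  "I_SAT N n \<phi> r = (if gnn_out N n \<phi> r > 1/2 then 1 else 0)"

definition nodes :: "nat \<Rightarrow> formula \<Rightarrow> (nat + nat) set" where
  "nodes n \<phi> = Inl ` {..<length \<phi>} \<union> Inr ` {..<n}"

definition rni_space :: "nat \<Rightarrow> formula \<Rightarrow> (nat + nat \<Rightarrow> real) measure" where
  "rni_space n \<phi> = PiM (nodes n \<phi>) (\<lambda>_. uniform_measure lborel {0..1::real})"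

definition err_prob :: "gnn \<Rightarrow> nat \<Rightarrow> formula \<Rightarrow> real" where
  "err_prob N n \<phi> = measure (rni_space n \<phi>)
      {r \<in> space (rni_space n \<phi>). I_SAT N n \<phi> r \<noteq> Phi_sat \<phi>}"

end

theory Submission
  imports Defs
begin

(* A continuous staircase sends the random value of variable node j to a bucket index
   beta_j in {0..M-1}. With probability at least 1 - (n + n^2)/M every value lies on a flat
   step and no two variable nodes share a bucket, so beta is injective on the letters.
   Enumerate the 2^M sets S of buckets as hidden coordinates: in coordinate S variable node j
   carries the truth value [beta_j in S], so by injectivity every assignment of the n letters
   occurs in some coordinate. Since b_i - sum_j E_ij x_j = 1 - (number of literals of clause i
   made true by x), one round of message passing lets constraint node i compute, in every
   coordinate, max 0 (b_i - sum_j E_ij x_j) = [clause i is falsified], and the readout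
   sum_S max 0 (1 - #falsified clauses) counts the coordinates carrying a satisfying
   assignment. Taking M > (n + n^2)/eps makes the error probability smaller than eps for
   every formula at once. *)

definition satisfies :: "(nat \<Rightarrow> bool) \<Rightarrow> formula \<Rightarrow> bool" where
  "satisfies w \<phi> \<longleftrightarrow> (\<forall>C\<in>set \<phi>. \<exists>l\<in>C. w (fst l) = snd l)"

lemma satisfiable_iff_satisfies: "satisfiable \<phi> \<longleftrightarrow> (\<exists>w. satisfies w \<phi>)"
  by (simp add: satisfiable_def satisfies_def)

lemma satisfies_cong:
  assumes "\<forall>C\<in>set \<phi>. \<forall>l\<in>C. w (fst l) = w' (fst l)"
  shows "satisfies w \<phi> \<longleftrightarrow> satisfies w' \<phi>"
  using assms by (fastforce simp: satisfies_def)

lemma satisfiable_iff_satisfies_image_subset: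
  assumes letters: "\<forall>C\<in>set \<phi>. \<forall>l\<in>C. fst l < n" and inj: "inj_on \<beta> {..<n}"
  shows "satisfiable \<phi> \<longleftrightarrow> (\<exists>S \<subseteq> \<beta> ` {..<n}. satisfies (\<lambda>j. \<beta> j \<in> S) \<phi>)"
proof
  assume "satisfiable \<phi>"
  then obtain w where w: "satisfies w \<phi>" by (auto simp: satisfiable_iff_satisfies)
  define S where "S = \<beta> ` {j. j < n \<and> w j}"
  have "\<beta> j \<in> S \<longleftrightarrow> w j" if "j < n" for j
    using inj that by (auto simp: S_def inj_on_def)
  then have "satisfies (\<lambda>j. \<beta> j \<in> S) \<phi>"
    using w letters satisfies_cong[of \<phi> w] by metis
  moreover have "S \<subseteq> \<beta> ` {..<n}" by (auto simp: S_def)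
  ultimately show "\<exists>S \<subseteq> \<beta> ` {..<n}. satisfies (\<lambda>j. \<beta> j \<in> S) \<phi>" by blast
qed (auto simp: satisfiable_iff_satisfies)

lemma clause_residual:
  fixes C :: clause and w :: "nat \<Rightarrow> bool"
  assumes fin: "finite C" and inj: "inj_on fst C" and letters: "fst ` C \<subseteq> {..<n}"
  shows "(1 - real (card {l\<in>C. snd l = False}))
      - (\<Sum>j<n. (if (j, True) \<in> C then 1 else if (j, False) \<in> C then -1 else 0) * of_bool (w j))
    = 1 - real (card {l\<in>C. w (fst l) = snd l})"
proof -
  define g where "g j = (if (j, True) \<in> C then 1 else if (j, False) \<in> C then -1 else 0)
      * (of_bool (w j) :: real)" for j
  have "(\<Sum>j<n. g j) = (\<Sum>j\<in>fst ` C. g j)"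
    by (rule sum.mono_neutral_right) (use letters in \<open>auto simp: g_def image_iff\<close>, force+)
  also have "\<dots> = (\<Sum>l\<in>C. g (fst l))"
    by (rule sum.reindex[OF inj, unfolded comp_def])
  also have "\<dots> = (\<Sum>l\<in>C. (if snd l then 1 else -1) * of_bool (w (fst l)))"
  proof (rule sum.cong[OF refl])
    fix l assume l: "l \<in> C"
    obtain j s where ljs: "l = (j, s)" by (cases l)
    have "(j, \<not> s) \<notin> C"
      using inj l ljs by (metis fst_conv inj_onD prod.inject)
    then show "g (fst l) = (if snd l then 1 else -1) * of_bool (w (fst l))"
      using l ljs by (cases s) (auto simp: g_def)
  qed
  finally have "(\<Sum>j<n. g j) = (\<Sum>l\<in>C. (if snd l then 1 else -1) * of_bool (w (fst l)))" .
  moreover have "(\<Sum>l\<in>C. of_bool (snd l = False)) + (\<Sum>l\<in>C. (if snd l then 1 else -1) * of_bool (w (fst l)))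
      = (\<Sum>l\<in>C. of_bool (w (fst l) = snd l) :: real)"
    by (subst sum.distrib[symmetric]) (rule sum.cong, auto)
  ultimately show ?thesis
    using fin by (simp add: g_def Int_def conj_commute)
qed

lemma constraint_residual:
  assumes "\<phi> \<in> kcnf k n m" and "i < length \<phi>" and x: "\<forall>j<n. x j = of_bool (w j)"
  shows "max 0 (b_feat \<phi> i - (\<Sum>j<n. edge_w \<phi> i j * x j))
    = of_bool (\<not> (\<exists>l\<in>\<phi> ! i. w (fst l) = snd l))"
proof -
  have "k_clause k (\<phi> ! i)" and letters: "\<forall>l\<in>\<phi> ! i. fst l < n"
    using assms by (auto simp: kcnf_def)
  then have fin: "finite (\<phi> ! i)" and "inj_on fst (\<phi> ! i)"
    by (auto simp: k_clause_def)
  with letters x have "b_feat \<phi> i - (\<Sum>j<n. edge_w \<phi> i j * x j)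
      = 1 - real (card {l\<in>\<phi> ! i. w (fst l) = snd l})"
    unfolding b_feat_def edge_w_def by (subst clause_residual[symmetric]) auto
  moreover have "card {l\<in>\<phi> ! i. w (fst l) = snd l} = 0 \<longleftrightarrow> \<not> (\<exists>l\<in>\<phi> ! i. w (fst l) = snd l)"
    using fin by auto
  ultimately show ?thesis by auto
qed

lemma of_bool_satisfies:
  "of_bool (satisfies w \<phi>) = max 0 (1 - (\<Sum>i<length \<phi>. of_bool (\<not> (\<exists>l\<in>\<phi> ! i. w (fst l) = snd l))) :: real)"
proof -
  let ?F = "{i\<in>{..<length \<phi>}. \<not> (\<exists>l\<in>\<phi> ! i. w (fst l) = snd l)}"
  have "(\<Sum>i<length \<phi>. of_bool (\<not> (\<exists>l\<in>\<phi> ! i. w (fst l) = snd l)) :: real) = real (card ?F)"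
    by (simp add: Int_def)
  moreover have "card ?F = 0 \<longleftrightarrow> satisfies w \<phi>"
    by (auto simp: satisfies_def all_set_conv_all_nth)
  moreover have "max 0 (1 - real c) = of_bool (c = 0)" for c :: nat
    by (cases c) auto
  ultimately show ?thesis
    by (simp only:)
qed

definition clip :: "real \<Rightarrow> real" where
  "clip y = max 0 (min 1 y)"

(* The c-th summand rises from 0 to 1 on [c/M - 1/M^2, c/M], so stair M is continuous and
   equals c on tread M c. *)
definition stair :: "nat \<Rightarrow> real \<Rightarrow> real" where
  "stair M r = (\<Sum>c\<in>{1..<M}. clip (real (M * M) * r - (real (c * M) - 1)))"

definition tread :: "nat \<Rightarrow> nat \<Rightarrow> real set" where
  "tread M c = {real c / real M .. real (Suc c) / real M - 1 / real (M * M)}"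

definition riser :: "nat \<Rightarrow> nat \<Rightarrow> real set" where
  "riser M c = {real (Suc c) / real M - 1 / real (M * M) <.. real (Suc c) / real M}"

definition bucket :: "nat \<Rightarrow> nat \<Rightarrow> real set" where
  "bucket M c = {real c / real M .. real (Suc c) / real M}"

lemma riser_borel [measurable]: "riser M c \<in> sets borel"
  by (simp add: riser_def)

lemma bucket_borel [measurable]: "bucket M c \<in> sets borel"
  by (simp add: bucket_def)

lemma tread_subset_bucket: "tread M c \<subseteq> bucket M c"
  unfolding tread_def bucket_def by auto

lemma stair_tread:
  assumes c: "c < M" and x: "x \<in> tread M c"
  shows "stair M x = real c"
proof -
  have M: "real M > 0" using c by simp
  have lower: "real (c * M) \<le> real (M * M) * x"
  proof -
    have "real c \<le> x * real M" using x M by (simp add: tread_def field_simps)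
    then show ?thesis using M by (simp add: mult_right_mono algebra_simps)
  qed
  have upper: "real (M * M) * x \<le> real (Suc c * M) - 1"
  proof -
    have "x * (real M * real M) \<le> (real (Suc c) / real M - 1 / real (M * M)) * (real M * real M)"
      using x M by (intro mult_right_mono) (auto simp: tread_def)
    also have "\<dots> = real (Suc c) * real M - 1" using M by (simp add: field_simps)
    finally show ?thesis by (simp add: algebra_simps)
  qed
  have "stair M x = (\<Sum>c'\<in>{1..<M}. of_bool (c' \<le> c))"
    unfolding stair_def
  proof (rule sum.cong[OF refl])
    fix c' assume "c' \<in> {1..<M}"
    show "clip (real (M * M) * x - (real (c' * M) - 1)) = of_bool (c' \<le> c)"
    proof (cases "c' \<le> c")
      case True
      then have "real (c' * M) \<le> real (c * M)" by (simp add: mult_right_mono)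
      then show ?thesis using True lower by (simp add: clip_def)
    next
      case False
      then have "Suc c * M \<le> c' * M" by (intro mult_right_mono) auto
      then have "real (Suc c * M) \<le> real (c' * M)" by (simp only: of_nat_le_iff)
      then show ?thesis using False upper by (simp add: clip_def)
    qed
  qed
  also have "\<dots> = real (card ({1..<M} \<inter> {..c}))"
    by (simp add: Int_def)
  also have "{1..<M} \<inter> {..c} = {1..c}" using c by auto
  finally show ?thesis by simp
qed

lemma tread_or_riser:
  fixes x :: real
  assumes M: "M \<ge> 1" and x: "x \<in> {0..1}" and not_riser: "\<forall>c<M. x \<notin> riser M c"
  shows "\<exists>c<M. x \<in> tread M c"
proof -
  have M0: "real M > 0" using M by simp
  define c where "c = nat \<lfloor>x * real M\<rfloor>"
  have fl: "real c \<le> x * real M" "x * real M < real c + 1"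
    using x M0 unfolding c_def by (simp_all add: of_nat_nat)
  have "c < M"
  proof (rule ccontr)
    assume "\<not> c < M"
    then have "real M * 1 \<le> real M * x" using fl by (simp add: mult.commute)
    then have "x = 1" using x M0 by (simp only: mult_le_cancel_left_pos) simp
    moreover have "real (Suc (M - 1)) / real M = 1" using M by (simp add: of_nat_diff)
    ultimately have "x \<in> riser M (M - 1)" using M0 by (simp add: riser_def)
    then show False using not_riser M by simp
  qed
  moreover have "real c / real M \<le> x" and "x < real (Suc c) / real M"
    using fl M0 by (simp_all add: field_simps)
  ultimately show ?thesis
    using not_riser by (intro exI[of _ c]) (auto simp: tread_def riser_def)
qed

lemma stair_injective:
  assumes M: "M \<ge> 1"
    and on_treads: "\<forall>j\<in>J. x j \<in> {0..1} \<and> (\<forall>c<M. x j \<notin> riser M c)"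
    and separated: "\<forall>j\<in>J. \<forall>j'\<in>J. \<forall>c<M. x j \<in> bucket M c \<longrightarrow> x j' \<in> bucket M c \<longrightarrow> j = j'"
  shows "\<exists>\<beta>. (\<forall>j\<in>J. \<beta> j < M \<and> stair M (x j) = real (\<beta> j)) \<and> inj_on \<beta> J"
proof -
  have "\<forall>j\<in>J. \<exists>c<M. x j \<in> tread M c"
    using on_treads tread_or_riser[OF M] by blast
  then obtain \<beta> where \<beta>: "\<And>j. j \<in> J \<Longrightarrow> \<beta> j < M \<and> x j \<in> tread M (\<beta> j)"
    by metis
  have "inj_on \<beta> J"
  proof (rule inj_onI)
    fix j j' assume "j \<in> J" "j' \<in> J" "\<beta> j = \<beta> j'"
    then show "j = j'"
      using separated \<beta> tread_subset_bucket by (metis subsetD)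
  qed
  then show ?thesis using \<beta> stair_tread by blast
qed

definition hat :: "real \<Rightarrow> real" where
  "hat y = max 0 (1 - \<bar>y\<bar>)"

definition stair_mem :: "nat set \<Rightarrow> nat \<Rightarrow> real \<Rightarrow> real" where
  "stair_mem S M r = (\<Sum>a\<in>S. hat (stair M r - real a))"

lemma stair_mem_eq_of_bool:
  assumes "finite S" and "stair M r = real b"
  shows "stair_mem S M r = of_bool (b \<in> S)"
proof -
  have "hat (real b - real a) = of_bool (a = b)" for a
    by (cases "a = b") (auto simp: hat_def)
  then show ?thesis
    using assms by (simp add: stair_mem_def sum.delta')
qed

lemma continuous_on_stair_mem: "continuous_on UNIV (stair_mem S M)"
  unfolding stair_mem_def stair_def hat_def clip_def by (intro continuous_intros)

(* Coordinate v < K of variable node j holds [beta_j in e v], the value of p_j under the v-th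
   assignment; coordinate K of constraint node i holds b_i. *)
definition sat_gnn :: "(nat \<Rightarrow> nat set) \<Rightarrow> nat \<Rightarrow> nat \<Rightarrow> gnn" where
  "sat_gnn e K M = \<lparr> dim = Suc K, layers = 2,
     fin_V = (\<lambda>p c. if c = K then fst p else 0),
     fin_W = (\<lambda>r c. if c < K then stair_mem (e c) M r else 0),
     fV = (\<lambda>k x. x), fW = (\<lambda>k x. x),
     gV = (\<lambda>k p c. if c < K then max 0 (fst p K - snd p c) else 0),
     gW = (\<lambda>k p c. 0),
     fout = (\<lambda>p. \<Sum>v<K. max 0 (1 - fst p v)) \<rparr>"

lemma continuous_on_fst_component: "continuous_on S (\<lambda>x::vec \<times> vec. fst x c)"
  by (rule continuous_on_subset[OF continuous_on_product_then_coordinatewise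
        [OF continuous_on_fst[OF continuous_on_id[of UNIV]]]]) simp

lemma continuous_on_snd_component: "continuous_on S (\<lambda>x::vec \<times> vec. snd x c)"
  by (rule continuous_on_subset[OF continuous_on_product_then_coordinatewise
        [OF continuous_on_snd[OF continuous_on_id[of UNIV]]]]) simp

lemma valid_sat_gnn: "valid_gnn (sat_gnn e K M)"
  unfolding valid_gnn_def sat_gnn_def Let_def
  apply (simp add: vecs_def)
  apply (intro conjI)
  subgoal apply (intro continuous_on_coordinatewise_then_product)
    subgoal for i by (cases "i = K") (auto intro!: continuous_intros) done
  subgoal by auto
  subgoal apply (intro continuous_on_coordinatewise_then_product)
    subgoal for i by (cases "i < K") (auto intro!: continuous_intros continuous_on_stair_mem) done
  subgoal by auto
  subgoal apply (intro continuous_on_coordinatewise_then_product)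
    subgoal for i by (cases "i < K")
        (auto intro!: continuous_intros continuous_on_fst_component continuous_on_snd_component) done
  subgoal by auto
  subgoal by auto
  subgoal by (intro continuous_intros continuous_on_fst_component)
  done

lemma gnn_out_sat_gnn:
  assumes \<phi>: "\<phi> \<in> kcnf k n m" and fin: "\<forall>v<K. finite (e v)"
    and \<beta>: "\<forall>j<n. stair M (r (Inr j)) = real (\<beta> j)"
  shows "gnn_out (sat_gnn e K M) n \<phi> r = real (card {v\<in>{..<K}. satisfies (\<lambda>j. \<beta> j \<in> e v) \<phi>})"
proof -
  have "gnn_out (sat_gnn e K M) n \<phi> r = (\<Sum>v<K. max 0 (1 - (\<Sum>i<length \<phi>.
        max 0 (b_feat \<phi> i - (\<Sum>j<n. edge_w \<phi> i j * stair_mem (e v) M (r (Inr j)))))))"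
    by (simp add: gnn_out_def sat_gnn_def)
  also have "\<dots> = (\<Sum>v<K. max 0 (1 - (\<Sum>i<length \<phi>.
        of_bool (\<not> (\<exists>l\<in>\<phi> ! i. (\<beta> (fst l) \<in> e v) = snd l)))))"
    using fin \<beta> by (intro sum.cong refl arg_cong2[where f = max] arg_cong2[where f = minus]
        constraint_residual[OF \<phi>]) (auto simp: stair_mem_eq_of_bool)
  also have "\<dots> = (\<Sum>v<K. of_bool (satisfies (\<lambda>j. \<beta> j \<in> e v) \<phi>))"
    by (simp only: of_bool_satisfies)
  also have "\<dots> = real (card {v\<in>{..<K}. satisfies (\<lambda>j. \<beta> j \<in> e v) \<phi>})"
    by (simp add: Int_def)
  finally show ?thesis .
qed

lemma I_SAT_sat_gnn:
  assumes \<phi>: "\<phi> \<in> kcnf k n m" and e: "bij_betw e {..<K} (Pow {..<M})"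
    and \<beta>: "\<forall>j<n. \<beta> j < M \<and> stair M (r (Inr j)) = real (\<beta> j)" and inj: "inj_on \<beta> {..<n}"
  shows "I_SAT (sat_gnn e K M) n \<phi> r = Phi_sat \<phi>"
proof -
  have letters: "\<forall>C\<in>set \<phi>. \<forall>l\<in>C. fst l < n" using \<phi> by (auto simp: kcnf_def)
  have "satisfiable \<phi> \<longleftrightarrow> (\<exists>S\<in>Pow {..<M}. satisfies (\<lambda>j. \<beta> j \<in> S) \<phi>)"
  proof
    assume "satisfiable \<phi>"
    then show "\<exists>S\<in>Pow {..<M}. satisfies (\<lambda>j. \<beta> j \<in> S) \<phi>"
      using satisfiable_iff_satisfies_image_subset[OF letters inj] \<beta> by fastforce
  qed (auto simp: satisfiable_iff_satisfies)
  also have "\<dots> \<longleftrightarrow> (\<exists>S\<in>e ` {..<K}. satisfies (\<lambda>j. \<beta> j \<in> S) \<phi>)"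
    using e by (simp add: bij_betw_def)
  also have "\<dots> \<longleftrightarrow> {v\<in>{..<K}. satisfies (\<lambda>j. \<beta> j \<in> e v) \<phi>} \<noteq> {}"
    by blast
  finally have "satisfiable \<phi> \<longleftrightarrow> card {v\<in>{..<K}. satisfies (\<lambda>j. \<beta> j \<in> e v) \<phi>} \<noteq> 0"
    by simp
  moreover have "\<forall>v<K. finite (e v)"
    using e by (auto simp: bij_betw_def intro: finite_subset)
  then have "gnn_out (sat_gnn e K M) n \<phi> r = real (card {v\<in>{..<K}. satisfies (\<lambda>j. \<beta> j \<in> e v) \<phi>})"
    using gnn_out_sat_gnn[OF \<phi>] \<beta> by blast
  moreover have "1 / 2 < real c \<longleftrightarrow> c \<noteq> 0" for c :: nat
    by (cases c) auto
  ultimately show ?thesis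
    unfolding I_SAT_def Phi_sat_def by presburger
qed

lemma (in product_prob_space) measure_PiM_Collect:
  assumes "J \<subseteq> I" "finite J" "\<And>i. i \<in> J \<Longrightarrow> X i \<in> sets (M i)"
  shows "measure (Pi\<^sub>M I M) {x\<in>space (Pi\<^sub>M I M). \<forall>i\<in>J. x i \<in> X i} = (\<Prod>i\<in>J. measure (M i) (X i))"
  using emeasure_PiM_Collect[OF assms]
  unfolding emeasure_eq_measure M.emeasure_eq_measure
  by (simp add: prod_ennreal measure_nonneg prod_nonneg)

lemma sets_PiM_Collect:
  assumes "J \<subseteq> I" "finite J" "\<And>i. i \<in> J \<Longrightarrow> X i \<in> sets (M i)"
  shows "{x\<in>space (Pi\<^sub>M I M). \<forall>i\<in>J. x i \<in> X i} \<in> sets (Pi\<^sub>M I M)"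
proof -
  have "{x\<in>space (Pi\<^sub>M I M). \<forall>i\<in>J. x i \<in> X i} = prod_emb I M J (Pi\<^sub>E J X)"
    unfolding prod_emb_def using assms by (auto simp: space_PiM Pi_iff)
  then show ?thesis
    using sets_PiM_I[of J I X M] assms by simp
qed

lemma (in product_prob_space) measure_PiM_Collect_single:
  assumes "i \<in> I" "A \<in> sets (M i)"
  shows "measure (Pi\<^sub>M I M) {x\<in>space (Pi\<^sub>M I M). x i \<in> A} = measure (M i) A"
  using measure_PiM_Collect[of "{i}" "\<lambda>_. A"] assms by simp

lemma (in finite_measure) measure_UN_le_card_mult:
  assumes "finite A" "\<And>a. a \<in> A \<Longrightarrow> E a \<in> sets M" "\<And>a. a \<in> A \<Longrightarrow> measure M (E a) \<le> b"
  shows "measure M (\<Union>a\<in>A. E a) \<le> real (card A) * b"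
  using finite_measure_subadditive_finite[of A E] sum_bounded_above[of A "\<lambda>a. measure M (E a)" b]
    assms by fastforce

abbreviation unif01 :: "real measure" where
  "unif01 \<equiv> uniform_measure lborel {0..1}"

abbreviation unif01_iid :: "'i set \<Rightarrow> ('i \<Rightarrow> real) measure" where
  "unif01_iid I \<equiv> Pi\<^sub>M I (\<lambda>_. unif01)"

lemma product_prob_space_unif01: "product_prob_space (\<lambda>_. unif01)"
  by (intro product_prob_spaceI prob_space_uniform_measure) simp_all

lemma measure_unif01_interval:
  assumes "0 \<le> a" "a \<le> b" "b \<le> 1"
  shows "measure unif01 {a..b} = b - a" and "measure unif01 {a<..b} = b - a"
proof -
  have "{0..1} \<inter> {a..b} = {a..b}" and "{0..1} \<inter> {a<..b} = {a<..b}"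
    using assms by auto
  then show "measure unif01 {a..b} = b - a" and "measure unif01 {a<..b} = b - a"
    using assms by simp_all
qed

lemma measure_unif01_riser:
  assumes "c < M"
  shows "measure unif01 (riser M c) = 1 / real (M * M)"
proof -
  have M: "real M \<ge> 1" using assms by simp
  have "1 / real (M * M) \<le> 1 / real M"
    using M by (simp add: field_simps)
  also have "\<dots> \<le> real (Suc c) / real M"
    by (simp add: divide_right_mono)
  finally have "0 \<le> real (Suc c) / real M - 1 / real (M * M)" by simp
  moreover have "real (Suc c) / real M \<le> 1"
    using assms by (simp add: field_simps)
  ultimately show ?thesis
    unfolding riser_def by (subst measure_unif01_interval(2)) auto
qed

lemma measure_unif01_bucket:
  assumes "c < M"
  shows "measure unif01 (bucket M c) = 1 / real M"
proof -
  have "real c / real M \<le> real (Suc c) / real M" and "real (Suc c) / real M \<le> 1"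
    using assms by (simp_all add: divide_right_mono field_simps)
  then show ?thesis
    unfolding bucket_def by (subst measure_unif01_interval(1)) (auto simp: diff_divide_distrib[symmetric])
qed

lemma off_treads_unif01_iid:
  fixes I J :: "'i set"
  assumes J: "J \<subseteq> I" "finite J" and M: "M \<ge> 1"
  defines "A \<equiv> {r\<in>space (unif01_iid I). \<exists>j\<in>J. r j \<notin> {0..1} \<or> (\<exists>c<M. r j \<in> riser M c)}"
  shows "A \<in> sets (unif01_iid I)" and "measure (unif01_iid I) A \<le> real (card J) / real M"
proof -
  interpret product_prob_space "\<lambda>_. unif01" I
    by (rule product_prob_space_unif01)
  define outside where "outside = (\<Union>j\<in>J. {r\<in>space (unif01_iid I). r j \<in> - {0..1}})"
  define on_riser where
    "on_riser = (\<Union>(j, c)\<in>J \<times> {..<M}. {r\<in>space (unif01_iid I). r j \<in> riser M c})"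
  have A: "A = outside \<union> on_riser"
    unfolding A_def outside_def on_riser_def by auto
  have sets: "outside \<in> sets (unif01_iid I)" "on_riser \<in> sets (unif01_iid I)"
    unfolding outside_def on_riser_def using J by (auto intro!: sets.finite_UN)
  then show "A \<in> sets (unif01_iid I)"
    unfolding A by simp
  have "measure (unif01_iid I) {r\<in>space (unif01_iid I). r j \<in> - {0..1}} = 0" if "j \<in> J" for j
    using J that by (subst measure_PiM_Collect_single) auto
  moreover have "measure (unif01_iid I) {r\<in>space (unif01_iid I). r j \<in> riser M c} = 1 / real (M * M)"
    if "j \<in> J" "c < M" for j c
    using J that by (subst measure_PiM_Collect_single)
      (auto simp: measure_unif01_riser simp del: measure_uniform_measure)
  ultimately have "measure (unif01_iid I) outside + measure (unif01_iid I) on_riser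
      \<le> real (card J) * 0 + real (card (J \<times> {..<M})) * (1 / real (M * M))"
    unfolding outside_def on_riser_def using J
    by (intro add_mono P.measure_UN_le_card_mult) auto
  then have "measure (unif01_iid I) A \<le> real (card J) * 0 + real (card (J \<times> {..<M})) * (1 / real (M * M))"
    unfolding A using sets measure_Un_le by (meson order_trans)
  also have "\<dots> = real (card J) / real M"
    using M by (simp add: card_cartesian_product)
  finally show "measure (unif01_iid I) A \<le> real (card J) / real M" .
qed

lemma bucket_collision_unif01_iid:
  fixes I J :: "'i set"
  assumes J: "J \<subseteq> I" "finite J" and M: "M \<ge> 1"
  defines "A \<equiv> {r\<in>space (unif01_iid I).
    \<exists>j\<in>J. \<exists>j'\<in>J. j \<noteq> j' \<and> (\<exists>c<M. r j \<in> bucket M c \<and> r j' \<in> bucket M c)}"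
  shows "A \<in> sets (unif01_iid I)" and "measure (unif01_iid I) A \<le> real (card J) ^ 2 / real M"
proof -
  interpret product_prob_space "\<lambda>_. unif01" I
    by (rule product_prob_space_unif01)
  define pairs where "pairs = {p \<in> J \<times> J. fst p \<noteq> snd p} \<times> {..<M}"
  define collision where
    "collision j j' c = {r\<in>space (unif01_iid I). \<forall>i\<in>{j, j'}. r i \<in> bucket M c}" for j j' c
  have A: "A = (\<Union>((j, j'), c)\<in>pairs. collision j j' c)"
    unfolding A_def pairs_def collision_def by (auto; blast)
  have "finite pairs"
    using J by (simp add: pairs_def)
  moreover have sets: "collision j j' c \<in> sets (unif01_iid I)" if "j \<in> J" "j' \<in> J" for j j' c
    unfolding collision_def using J that by (intro sets_PiM_Collect) auto
  ultimately show "A \<in> sets (unif01_iid I)"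
    unfolding A pairs_def by (auto intro!: sets.finite_UN)
  have "measure (unif01_iid I) (collision j j' c) = 1 / real (M * M)"
    if "j \<in> J" "j' \<in> J" "j \<noteq> j'" "c < M" for j j' c
    unfolding collision_def using J that
    by (subst measure_PiM_Collect) (auto simp: measure_unif01_bucket simp del: measure_uniform_measure)
  then have "measure (unif01_iid I) A \<le> real (card pairs) * (1 / real (M * M))"
    unfolding A using sets \<open>finite pairs\<close> by (intro P.measure_UN_le_card_mult) (auto simp: pairs_def)
  also have "\<dots> \<le> real (card J ^ 2 * M) * (1 / real (M * M))"
  proof (intro mult_right_mono of_nat_mono)
    have "card pairs \<le> card ((J \<times> J) \<times> {..<M})"
      unfolding pairs_def using J by (intro card_mono) auto
    then show "card pairs \<le> card J ^ 2 * M"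
      by (simp add: card_cartesian_product power2_eq_square)
  qed simp
  also have "\<dots> = real (card J) ^ 2 / real M"
    using M by simp
  finally show "measure (unif01_iid I) A \<le> real (card J) ^ 2 / real M" .
qed

lemma stair_injective_outside_small_set:
  fixes I J :: "'i set"
  assumes J: "J \<subseteq> I" "finite J" and M: "M \<ge> 1"
  obtains X where "X \<in> sets (unif01_iid I)"
    and "measure (unif01_iid I) X \<le> (real (card J) + real (card J) ^ 2) / real M"
    and "\<And>r. r \<in> space (unif01_iid I) \<Longrightarrow> r \<notin> X \<Longrightarrow>
           \<exists>\<beta>. (\<forall>j\<in>J. \<beta> j < M \<and> stair M (r j) = real (\<beta> j)) \<and> inj_on \<beta> J"
proof -
  let ?off = "{r\<in>space (unif01_iid I). \<exists>j\<in>J. r j \<notin> {0..1} \<or> (\<exists>c<M. r j \<in> riser M c)}"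
  let ?collision = "{r\<in>space (unif01_iid I).
    \<exists>j\<in>J. \<exists>j'\<in>J. j \<noteq> j' \<and> (\<exists>c<M. r j \<in> bucket M c \<and> r j' \<in> bucket M c)}"
  note off = off_treads_unif01_iid[OF J M] and collision = bucket_collision_unif01_iid[OF J M]
  show thesis
  proof (rule that)
    show "?off \<union> ?collision \<in> sets (unif01_iid I)"
      using off(1) collision(1) by simp
    have "measure (unif01_iid I) (?off \<union> ?collision)
        \<le> measure (unif01_iid I) ?off + measure (unif01_iid I) ?collision"
      using off(1) collision(1) by (rule measure_Un_le)
    then show "measure (unif01_iid I) (?off \<union> ?collision) \<le> (real (card J) + real (card J) ^ 2) / real M"
      using off(2) collision(2) by (simp add: add_divide_distrib)
  next
    fix r assume r: "r \<in> space (unif01_iid I)" "r \<notin> ?off \<union> ?collision"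
    then have "\<forall>j\<in>J. r j \<in> {0..1} \<and> (\<forall>c<M. r j \<notin> riser M c)"
      by auto
    moreover have "\<forall>j\<in>J. \<forall>j'\<in>J. \<forall>c<M. r j \<in> bucket M c \<longrightarrow> r j' \<in> bucket M c \<longrightarrow> j = j'"
      using r by blast
    ultimately show "\<exists>\<beta>. (\<forall>j\<in>J. \<beta> j < M \<and> stair M (r j) = real (\<beta> j)) \<and> inj_on \<beta> J"
      by (rule stair_injective[OF M])
  qed
qed

lemma err_prob_sat_gnn:
  assumes \<phi>: "\<phi> \<in> kcnf k n m" and e: "bij_betw e {..<K} (Pow {..<M})" and M: "M \<ge> 1"
  shows "err_prob (sat_gnn e K M) n \<phi> \<le> (real n + real n ^ 2) / real M"
proof -
  let ?P = "rni_space n \<phi>"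
  interpret prob_space ?P
    unfolding rni_space_def by (intro prob_space_PiM prob_space_uniform_measure) simp_all
  have "Inr ` {..<n} \<subseteq> nodes n \<phi>" by (auto simp: nodes_def)
  then obtain X where X: "X \<in> sets ?P" "measure ?P X \<le> (real n + real n ^ 2) / real M"
    and good: "\<And>r. r \<in> space ?P \<Longrightarrow> r \<notin> X \<Longrightarrow>
      \<exists>\<beta>. (\<forall>j\<in>Inr ` {..<n}. \<beta> j < M \<and> stair M (r j) = real (\<beta> j)) \<and> inj_on \<beta> (Inr ` {..<n})"
    using stair_injective_outside_small_set[of "Inr ` {..<n}" "nodes n \<phi>" M] M
    by (auto simp: rni_space_def card_image)
  have "{r \<in> space ?P. I_SAT (sat_gnn e K M) n \<phi> r \<noteq> Phi_sat \<phi>} \<subseteq> X"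
  proof (intro subsetI CollectI, elim CollectE conjE, rule ccontr)
    fix r assume r: "r \<in> space ?P" "r \<notin> X" "I_SAT (sat_gnn e K M) n \<phi> r \<noteq> Phi_sat \<phi>"
    obtain \<beta> where \<beta>: "\<forall>j\<in>Inr ` {..<n}. \<beta> j < M \<and> stair M (r j) = real (\<beta> j)"
      and inj: "inj_on \<beta> (Inr ` {..<n})"
      using good r by blast
    have "inj_on (\<beta> \<circ> Inr) {..<n}"
      using inj by (simp add: inj_on_def)
    then have "I_SAT (sat_gnn e K M) n \<phi> r = Phi_sat \<phi>"
      using \<beta> by (intro I_SAT_sat_gnn[OF \<phi> e]) auto
    with r show False by simp
  qed
  then show ?thesis
    unfolding err_prob_def using X finite_measure_mono by (meson order_trans)
qed

theorem proposition7:
  fixes k n m :: nat and D :: "formula set" and \<epsilon> :: real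
  assumes "finite D" and "D \<subseteq> kcnf k n m" and "\<epsilon> > 0"
  shows "\<exists>N. valid_gnn N \<and> (\<forall>\<phi>\<in>D. err_prob N n \<phi> < \<epsilon>)"
proof -
  obtain M :: nat where M: "(real n + real n ^ 2) / \<epsilon> < real M"
    using reals_Archimedean2 by blast
  moreover have "0 \<le> (real n + real n ^ 2) / \<epsilon>"
    using \<open>\<epsilon> > 0\<close> by simp
  ultimately have "real M > 0" by linarith
  with M have "M \<ge> 1" and bound: "(real n + real n ^ 2) / real M < \<epsilon>"
    using \<open>\<epsilon> > 0\<close> by (auto simp: field_simps)
  obtain e where e: "bij_betw e {..<card (Pow {..<M})} (Pow {..<M})"
    using ex_bij_betw_nat_finite[of "Pow {..<M}"] by (auto simp: atLeast0LessThan)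
  let ?N = "sat_gnn e (card (Pow {..<M})) M"
  \<comment> \<open>the bound does not depend on the formula\<close>
  have "err_prob ?N n \<phi> < \<epsilon>" if "\<phi> \<in> D" for \<phi>
    using err_prob_sat_gnn[OF _ e \<open>M \<ge> 1\<close>] assms(2) that bound by (meson order_le_less_trans subsetD)
  then show ?thesis
    using valid_sat_gnn by blast
qed

end
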